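(* Assume all hypotheses of the following setting: $(X_t)_{t\in[0,1]}$ is a centered process as in the context whose KL coefficients $(Z_k)$ are mutually independent, each $Z_k$ sub-Gaussian with mean $0$ and parameter $\sqrt{\lambda_k}$; each eigenfunction $e_k$ is Lipschitz on $[0,1]$ with constant $G(k)$ and $C_{\mathrm M}:=\sup_k\lambda_kG(k)^2<\infty$; $c_g\in\mathbb R$, $K_g,K'_g\ge0$, and the functions $g_t:\mathbb R\to\mathbb R$ ($t\in[0,1]$) satisfy $g_t(x)-g_t(y)\le\max(|e^{c_gx}-e^{c_gy}|,K_g|x-y|)$ and $|g_t(x)-g_s(x)|\le K'_g|t-s|$ for all $x,y\in\mathbb R$, $s,t\in[0,1]$; $S_t=g_t(X_t)$. Let $T\ge1$, $t_1,\dots,t_T\in[0,1]$, $w_1,\dots,w_T\ge0$ with $\sum_iw_i=1$, and $f:\mathbb R^T\to\mathbb R$ with $|f(x)-f(y)|\le\sum_iw_i|x_i-y_i|$ for all $x,y$. For $\epsilon\in(0,1]$ with $L_X(\epsilon)\ge1$, let $M=\big\lceil\max\big(\sqrt{L_X(\epsilon)}/\epsilon,\;K_g'^2/\epsilon^2\big)\big\rceil$ and $c(t)=\lfloor tM\rfloor/M$. Then there is a constant $C$ independent of $\epsilon$, $T$, the $t_i$ and the $w_i$ such that $$\mathbb E\Big[\big(f(S_{c(t_1)},\dots,S_{c(t_T)})-f(S_{t_1},\dots,S_{t_T})\big)^2\Big]\le C\epsilon^2 .$$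
   Context: Standing setup: $(X_t)_{t\in[0,1]}$ is a centered stochastic process with $\mathbb E[X_t^2]<\infty$ whose covariance $k_X(s,t)=\mathbb E[X_sX_t]$ is continuous on $[0,1]^2$. Let $\mathcal K$ be the integral operator $(\mathcal Kf)(t)=\int_0^1k_X(s,t)f(s)\,ds$ on $L^2([0,1])$, with orthonormal eigenfunctions $(e_k)_{k\ge1}$ and eigenvalues $\lambda_1\ge\lambda_2\ge\dots\ge0$. The Karhunen–Loève (KL) expansion is $X_t=\sum_{k\ge1}Z_ke_k(t)$ with $Z_k=\int_0^1X_te_k(t)\,dt$, converging in $L^2(\mathbb P)$ uniformly in $t$; the $Z_k$ are centered and uncorrelated with $\mathbb E[Z_k^2]=\lambda_k$. The truncation index $L_X(\epsilon)$ is the smallest natural number $L$ such that $\mathbb E\big[(\sum_{k=1}^{L}Z_ke_k(t)-X_t)^2\big]\le\epsilon^2$ for all $t\in[0,1]$. A real random variable $W$ with mean $m$ is sub-Gaussian with parameter $s\ge0$ if $\mathbb E[\exp(\theta(W-m))]\le\exp(\theta^2s^2/2)$ for all $\theta\in\mathbb R$. *)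

theory Defs
  imports "HOL-Probability.Probability"
begin

definition KL_coeff :: "(real \<Rightarrow> 'a \<Rightarrow> real) \<Rightarrow> (nat \<Rightarrow> real \<Rightarrow> real) \<Rightarrow> nat \<Rightarrow> 'a \<Rightarrow> real" where
  "KL_coeff X e k \<omega> = (LBINT t=0..1. X t \<omega> * e k t)"

definition sub_gaussian :: "'a measure \<Rightarrow> ('a \<Rightarrow> real) \<Rightarrow> real \<Rightarrow> real \<Rightarrow> bool" where
  "sub_gaussian M W m s \<longleftrightarrow> s \<ge> 0 \<and> integrable M W \<and> (\<integral>\<omega>. W \<omega> \<partial>M) = m \<and>
     (\<forall>\<theta>::real. integrable M (\<lambda>\<omega>. exp (\<theta> * (W \<omega> - m))) \<and>
        (\<integral>\<omega>. exp (\<theta> * (W \<omega> - m)) \<partial>M) \<le> exp (\<theta>^2 * s^2 / 2))"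

definition trunc_index :: "'a measure \<Rightarrow> (real \<Rightarrow> 'a \<Rightarrow> real) \<Rightarrow> (nat \<Rightarrow> real \<Rightarrow> real) \<Rightarrow> real \<Rightarrow> nat" where
  "trunc_index M X e \<epsilon> = (LEAST L::nat. \<forall>t\<in>{0..1}.
      (\<integral>\<omega>. ((\<Sum>k=1..L. KL_coeff X e k \<omega> * e k t) - X t \<omega>)^2 \<partial>M) \<le> \<epsilon>^2)"

end

theory Submission
  imports Defs
begin

text \<open>
  Write \<open>c = c(t)\<close>. The increment \<open>S\<^sub>c - S\<^sub>t\<close> splits into a time step
  \<open>g\<^sub>c(X\<^sub>c) - g\<^sub>t(X\<^sub>c)\<close>, at most \<open>K'|c - t| \<le> \<epsilon>\<close> because \<open>M \<ge> K'\<^sup>2/\<epsilon>\<^sup>2\<close>,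
  and a space step \<open>g\<^sub>t(X\<^sub>c) - g\<^sub>t(X\<^sub>t)\<close>, at most \<open>K|X\<^sub>c - X\<^sub>t|\<close> or
  \<open>|c\<^sub>g| |X\<^sub>c - X\<^sub>t| (exp(c\<^sub>g X\<^sub>c) + exp(c\<^sub>g X\<^sub>t))\<close>. By AM-GM its square is bounded by
  \<open>\<epsilon>\<^sup>-\<^sup>2 |X\<^sub>c - X\<^sub>t|\<^sup>4\<close> plus \<open>\<epsilon>\<^sup>2\<close> times exponential moments of \<open>X\<close>.

  Both moments come from sub-Gaussianity: the KL coefficients are independent, so every
  truncation \<open>\<Sum> b\<^sub>k Z\<^sub>k\<close> is sub-Gaussian with variance proxy \<open>\<Sum> b\<^sub>k\<^sup>2 \<lambda>\<^sub>k\<close>. For the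
  increment this proxy is at most \<open>C\<^sub>M L |c - t|\<^sup>2\<close> on the first \<open>L = L\<^sub>X(\<epsilon>)\<close> terms
  (Lipschitz eigenfunctions) plus \<open>4\<epsilon>\<^sup>2\<close> on the tail (truncation error), hence \<open>O(\<epsilon>\<^sup>2)\<close>
  because \<open>M \<ge> \<surd>L/\<epsilon>\<close>. The bounds pass from the truncations to \<open>X\<close> by
  \<open>L\<^sup>2\<close>-convergence of the expansion and Fatou's lemma. Finally, the Lipschitz bound on
  \<open>f\<close> and Jensen's inequality for the weights reduce the claim to single increments.
\<close>

lemma abs_mult_le_sum_squares: "\<bar>a * b\<bar> \<le> a^2 + (b::real)^2"
proof -
  have "2 * (\<bar>a\<bar> * \<bar>b\<bar>) \<le> a^2 + b^2"
    using sum_squares_bound[of "\<bar>a\<bar>" "\<bar>b\<bar>"] by (simp add: power2_eq_square mult.assoc)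
  moreover have "0 \<le> \<bar>a\<bar> * \<bar>b\<bar>" by simp
  ultimately show ?thesis
    unfolding abs_mult by linarith
qed

lemma abs_power_le_exp_plus_exp_minus:
  fixes x :: real
  assumes "n > 0"
  shows "\<bar>x\<bar>^n \<le> real n ^ n * (exp x + exp (- x))"
proof -
  have "\<bar>x\<bar> / n \<le> exp (\<bar>x\<bar> / n)"
    using exp_ge_add_one_self[of "\<bar>x\<bar> / n"] by linarith
  then have "(\<bar>x\<bar> / n)^n \<le> exp (\<bar>x\<bar> / n) ^ n"
    by (intro power_mono) auto
  also have "\<dots> = exp \<bar>x\<bar>"
    using assms by (simp flip: exp_of_nat_mult)
  also have "\<dots> \<le> exp x + exp (- x)"
    by (cases "x \<ge> 0") (simp_all add: add_nonneg_pos add_pos_nonneg)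
  finally show ?thesis
    using assms by (simp add: power_divide field_simps)
qed

lemma abs_exp_diff_le: "\<bar>exp u - exp v\<bar> \<le> \<bar>u - v\<bar> * (exp u + exp (v::real))"
proof -
  have one_sided: "exp b - exp a \<le> (b - a) * exp b" for a b :: real
    using mult_right_mono[OF exp_ge_add_one_self[of "a - b"], of "exp b"]
    by (simp add: algebra_simps flip: exp_add)
  show ?thesis
  proof (cases "u \<le> v")
    case True
    then have "\<bar>exp u - exp v\<bar> = exp v - exp u" by simp
    also have "\<dots> \<le> (v - u) * exp v" by (rule one_sided)
    also have "\<dots> \<le> \<bar>u - v\<bar> * (exp u + exp v)" using True by (intro mult_mono) auto
    finally show ?thesis .
  next
    case False
    then have "\<bar>exp u - exp v\<bar> = exp u - exp v" by simp
    also have "\<dots> \<le> (u - v) * exp u" by (rule one_sided)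
    also have "\<dots> \<le> \<bar>u - v\<bar> * (exp u + exp v)" using False by (intro mult_mono) auto
    finally show ?thesis .
  qed
qed

lemma two_mult_le_weighted_squares:
  fixes u v \<epsilon> :: real
  assumes "\<epsilon> \<noteq> 0"
  shows "2 * u * v \<le> u^2 / \<epsilon>^2 + \<epsilon>^2 * v^2"
proof -
  have "0 \<le> (u / \<epsilon> - \<epsilon> * v)^2" by simp
  also have "\<dots> = u^2 / \<epsilon>^2 - 2 * u * v + \<epsilon>^2 * v^2"
    using assms by (simp add: power2_eq_square field_simps)
  finally show ?thesis by simp
qed

lemma power4_add_le: "(p + q)^4 \<le> 8 * (p^4 + q^4 :: real)"
proof -
  have sq: "(a + b)^2 \<le> 2 * (a^2 + b^2)" for a b :: real
    using zero_le_power2[of "a - b"] by (simp add: power2_eq_square algebra_simps)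
  have "(p + q)^4 = ((p + q)^2)^2" by simp
  also have "\<dots> \<le> (2 * (p^2 + q^2))^2"
    using sq[of p q] by (intro power_mono) auto
  also have "\<dots> = 4 * (p^2 + q^2)^2" by (simp only: power_mult_distrib) simp
  also have "\<dots> \<le> 4 * (2 * ((p^2)^2 + (q^2)^2))"
    using sq[of "p^2" "q^2"] by simp
  finally show ?thesis by simp
qed

lemma weighted_sum_square_le:
  fixes w a :: "'i \<Rightarrow> real"
  assumes "\<forall>i\<in>I. w i \<ge> 0" "(\<Sum>i\<in>I. w i) = 1"
  shows "(\<Sum>i\<in>I. w i * a i)^2 \<le> (\<Sum>i\<in>I. w i * (a i)^2)"
proof -
  define m where "m = (\<Sum>i\<in>I. w i * a i)"
  have "0 \<le> (\<Sum>i\<in>I. w i * (a i - m)^2)"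
    using assms by (intro sum_nonneg) auto
  also have "\<dots> = (\<Sum>i\<in>I. w i * (a i)^2) - 2 * m * (\<Sum>i\<in>I. w i * a i) + m^2 * (\<Sum>i\<in>I. w i)"
    by (simp add: power2_eq_square algebra_simps sum.distrib sum_subtractf sum_distrib_left
        sum_distrib_right)
  also have "\<dots> = (\<Sum>i\<in>I. w i * (a i)^2) - m^2"
    using assms by (simp add: m_def power2_eq_square)
  finally show ?thesis by (simp add: m_def)
qed

lemma time_space_increment_square_le:
  fixes a K \<epsilon> x y T1 T2 :: real
  assumes \<epsilon>: "\<epsilon> \<noteq> 0" and T1: "T1^2 \<le> \<epsilon>^2"
    and T2: "\<bar>T2\<bar> \<le> max \<bar>exp (a * x) - exp (a * y)\<bar> (K * \<bar>x - y\<bar>)"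
  shows "(T1 + T2)^2 \<le> (2 + K^2) * \<epsilon>^2 + (a^2 + K^2) / \<epsilon>^2 * (x - y)^4
           + 8 * a^2 * \<epsilon>^2 * (exp (4 * a * x) + exp (4 * a * y))"
proof -
  define p q d where "p = exp (a * x)" and "q = exp (a * y)" and "d = x - y"
  have T2_sq: "T2^2 \<le> (p - q)^2 + K^2 * d^2"
  proof -
    have "\<bar>T2\<bar>^2 \<le> (max \<bar>p - q\<bar> (K * \<bar>d\<bar>))^2"
      using T2 unfolding p_def q_def d_def by (intro power_mono) auto
    then show ?thesis
      by (cases "\<bar>p - q\<bar> \<le> K * \<bar>d\<bar>")
        (auto simp: max_def power_mult_distrib intro: add_increasing add_increasing2)
  qed
  have exp_sq: "(p - q)^2 \<le> a^2 * (d^2 * (p + q)^2)"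
  proof -
    have "\<bar>p - q\<bar> \<le> \<bar>a\<bar> * \<bar>d\<bar> * (p + q)"
      using abs_exp_diff_le[of "a * x" "a * y"]
      by (simp add: p_def q_def d_def abs_mult flip: right_diff_distrib)
    from power_mono[OF this, of 2] show ?thesis
      by (simp add: power_mult_distrib)
  qed
  have "2 * T2^2 \<le> a^2 * (2 * (d^2 * (p + q)^2)) + K^2 * (2 * d^2)"
    using T2_sq exp_sq by linarith
  also have "\<dots> \<le> a^2 * (d^4 / \<epsilon>^2 + \<epsilon>^2 * (8 * (p^4 + q^4))) + K^2 * (d^4 / \<epsilon>^2 + \<epsilon>^2)"
  proof (intro add_mono mult_left_mono)
    show "2 * (d^2 * (p + q)^2) \<le> d^4 / \<epsilon>^2 + \<epsilon>^2 * (8 * (p^4 + q^4))"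
      using two_mult_le_weighted_squares[OF \<epsilon>, of "d^2" "(p + q)^2"]
        mult_left_mono[OF power4_add_le[of p q], of "\<epsilon>^2"]
      by (simp add: mult.assoc flip: power_mult)
    show "2 * d^2 \<le> d^4 / \<epsilon>^2 + \<epsilon>^2"
      using two_mult_le_weighted_squares[OF \<epsilon>, of "d^2" 1] by (simp flip: power_mult)
  qed simp_all
  also have "\<dots> = (a^2 + K^2) / \<epsilon>^2 * d^4 + 8 * a^2 * \<epsilon>^2 * (p^4 + q^4) + K^2 * \<epsilon>^2"
    by (simp add: algebra_simps add_divide_distrib)
  finally have "2 * T2^2 \<le> (a^2 + K^2) / \<epsilon>^2 * d^4 + 8 * a^2 * \<epsilon>^2 * (p^4 + q^4) + K^2 * \<epsilon>^2" .
  moreover have "(T1 + T2)^2 \<le> 2 * T1^2 + 2 * T2^2"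
    using zero_le_power2[of "T1 - T2"] by (simp add: power2_eq_square algebra_simps)
  moreover have "p^4 = exp (4 * a * x)" "q^4 = exp (4 * a * y)"
    by (simp_all add: p_def q_def flip: exp_of_nat_mult)
  ultimately show ?thesis
    using T1 by (simp add: d_def algebra_simps)
qed

definition square_integrable :: "'a measure \<Rightarrow> ('a \<Rightarrow> real) \<Rightarrow> bool" where
  "square_integrable M Y \<longleftrightarrow> Y \<in> borel_measurable M \<and> integrable M (\<lambda>\<omega>. (Y \<omega>)^2)"

lemma square_integrable_mult_integrable:
  assumes "square_integrable M A" "square_integrable M B"
  shows "integrable M (\<lambda>\<omega>. A \<omega> * B \<omega>)"
proof (rule Bochner_Integration.integrable_bound)
  show "integrable M (\<lambda>\<omega>. (A \<omega>)^2 + (B \<omega>)^2)"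
    using assms unfolding square_integrable_def by auto
  show "(\<lambda>\<omega>. A \<omega> * B \<omega>) \<in> borel_measurable M"
    using assms unfolding square_integrable_def by auto
  show "AE \<omega> in M. norm (A \<omega> * B \<omega>) \<le> norm ((A \<omega>)^2 + (B \<omega>)^2)"
    using abs_mult_le_sum_squares by (intro AE_I2) (simp add: add_nonneg_nonneg)
qed

lemma square_integrable_add:
  assumes "square_integrable M A" "square_integrable M B"
  shows "square_integrable M (\<lambda>\<omega>. A \<omega> + B \<omega>)"
proof -
  have "(\<lambda>\<omega>. (A \<omega> + B \<omega>)^2) = (\<lambda>\<omega>. (A \<omega>)^2 + (B \<omega>)^2 + 2 * (A \<omega> * B \<omega>))"
    by (auto simp: power2_eq_square algebra_simps)
  then show ?thesis
    using assms square_integrable_mult_integrable[OF assms] unfolding square_integrable_def by auto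
qed

lemma square_integrable_cmult:
  "square_integrable M A \<Longrightarrow> square_integrable M (\<lambda>\<omega>. c * A \<omega>)"
  unfolding square_integrable_def by (auto simp: power_mult_distrib)

lemma square_integrable_diff:
  assumes "square_integrable M A" "square_integrable M B"
  shows "square_integrable M (\<lambda>\<omega>. A \<omega> - B \<omega>)"
  using square_integrable_add[OF assms(1) square_integrable_cmult[OF assms(2), of "-1"]] by simp

lemma square_integrable_sum:
  "(\<And>i. i \<in> I \<Longrightarrow> square_integrable M (A i)) \<Longrightarrow> square_integrable M (\<lambda>\<omega>. \<Sum>i\<in>I. A i \<omega>)"
proof (induction I rule: infinite_finite_induct)
  case (insert x F)
  then show ?case by (simp add: square_integrable_add)
qed (simp_all add: square_integrable_def)

lemma L2_tendsto_diff:
  assumes A: "\<And>n. square_integrable M (\<lambda>\<omega>. A n \<omega> - A' \<omega>)"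
    and B: "\<And>n. square_integrable M (\<lambda>\<omega>. B n \<omega> - B' \<omega>)"
    and lim_A: "(\<lambda>n. \<integral>\<omega>. (A n \<omega> - A' \<omega>)^2 \<partial>M) \<longlonglongrightarrow> 0"
    and lim_B: "(\<lambda>n. \<integral>\<omega>. (B n \<omega> - B' \<omega>)^2 \<partial>M) \<longlonglongrightarrow> 0"
  shows "(\<lambda>n. \<integral>\<omega>. ((A n \<omega> - B n \<omega>) - (A' \<omega> - B' \<omega>))^2 \<partial>M) \<longlonglongrightarrow> 0"
proof (rule tendsto_sandwich[of "\<lambda>_. 0"])
  show "(\<lambda>n. 2 * (\<integral>\<omega>. (A n \<omega> - A' \<omega>)^2 \<partial>M) + 2 * (\<integral>\<omega>. (B n \<omega> - B' \<omega>)^2 \<partial>M)) \<longlonglongrightarrow> 0"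
    using tendsto_add[OF tendsto_mult_right_zero[OF lim_A] tendsto_mult_right_zero[OF lim_B]] by simp
  have le: "(\<integral>\<omega>. ((A n \<omega> - B n \<omega>) - (A' \<omega> - B' \<omega>))^2 \<partial>M)
      \<le> 2 * (\<integral>\<omega>. (A n \<omega> - A' \<omega>)^2 \<partial>M) + 2 * (\<integral>\<omega>. (B n \<omega> - B' \<omega>)^2 \<partial>M)" for n
  proof -
    have "(\<integral>\<omega>. ((A n \<omega> - B n \<omega>) - (A' \<omega> - B' \<omega>))^2 \<partial>M)
        \<le> (\<integral>\<omega>. 2 * (A n \<omega> - A' \<omega>)^2 + 2 * (B n \<omega> - B' \<omega>)^2 \<partial>M)"
    proof (rule integral_mono)
      show "integrable M (\<lambda>\<omega>. ((A n \<omega> - B n \<omega>) - (A' \<omega> - B' \<omega>))^2)"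
        using square_integrable_diff[OF A B] unfolding square_integrable_def by (simp add: algebra_simps)
      show "integrable M (\<lambda>\<omega>. 2 * (A n \<omega> - A' \<omega>)^2 + 2 * (B n \<omega> - B' \<omega>)^2)"
        using A B unfolding square_integrable_def by auto
      show "((A n \<omega> - B n \<omega>) - (A' \<omega> - B' \<omega>))^2 \<le> 2 * (A n \<omega> - A' \<omega>)^2 + 2 * (B n \<omega> - B' \<omega>)^2"
        for \<omega> using zero_le_power2[of "A n \<omega> - A' \<omega> + (B n \<omega> - B' \<omega>)"]
        by (simp add: power2_eq_square algebra_simps)
    qed
    also have "\<dots> = 2 * (\<integral>\<omega>. (A n \<omega> - A' \<omega>)^2 \<partial>M) + 2 * (\<integral>\<omega>. (B n \<omega> - B' \<omega>)^2 \<partial>M)"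
      using A B unfolding square_integrable_def by simp
    finally show ?thesis .
  qed
  show "\<forall>\<^sub>F n in sequentially. (\<integral>\<omega>. ((A n \<omega> - B n \<omega>) - (A' \<omega> - B' \<omega>))^2 \<partial>M)
      \<le> 2 * (\<integral>\<omega>. (A n \<omega> - A' \<omega>)^2 \<partial>M) + 2 * (\<integral>\<omega>. (B n \<omega> - B' \<omega>)^2 \<partial>M)"
    using le by simp
  show "\<forall>\<^sub>F n in sequentially. 0 \<le> (\<integral>\<omega>. ((A n \<omega> - B n \<omega>) - (A' \<omega> - B' \<omega>))^2 \<partial>M)"
    by simp
qed simp

text \<open>Fatou's lemma along an a.e.\ convergent subsequence of an \<open>L\<^sup>2\<close>-convergent sequence.\<close>
lemma nn_integral_le_of_L2_tendsto:
  fixes h :: "real \<Rightarrow> real"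
  assumes [measurable]: "\<And>n. Y n \<in> borel_measurable M"
    and sq_int: "\<And>n. square_integrable M (\<lambda>\<omega>. Y n \<omega> - Y' \<omega>)"
    and lim: "(\<lambda>n. \<integral>\<omega>. (Y n \<omega> - Y' \<omega>)^2 \<partial>M) \<longlonglongrightarrow> 0"
    and h: "continuous_on UNIV h"
    and bound: "eventually (\<lambda>n. (\<integral>\<^sup>+\<omega>. ennreal (h (Y n \<omega>)) \<partial>M) \<le> B) sequentially"
  shows "(\<integral>\<^sup>+\<omega>. ennreal (h (Y' \<omega>)) \<partial>M) \<le> B"
proof -
  have "integrable M (\<lambda>\<omega>. (Y n \<omega> - Y' \<omega>)^2)" for n
    using sq_int unfolding square_integrable_def by blast
  moreover have "(\<lambda>n. \<integral>\<omega>. norm ((Y n \<omega> - Y' \<omega>)^2) \<partial>M) \<longlonglongrightarrow> 0"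
    using lim by simp
  ultimately obtain r where r: "strict_mono r"
    and ae: "AE \<omega> in M. (\<lambda>n. (Y (r n) \<omega> - Y' \<omega>)^2) \<longlonglongrightarrow> 0"
    using tendsto_L1_AE_subseq[of M "\<lambda>n \<omega>. (Y n \<omega> - Y' \<omega>)^2"] by blast
  have [measurable]: "h \<in> borel_measurable borel"
    using h by (rule borel_measurable_continuous_onI)
  have "(\<integral>\<^sup>+\<omega>. ennreal (h (Y' \<omega>)) \<partial>M) = (\<integral>\<^sup>+\<omega>. liminf (\<lambda>n. ennreal (h (Y (r n) \<omega>))) \<partial>M)"
  proof (rule nn_integral_cong_AE)
    show "AE \<omega> in M. ennreal (h (Y' \<omega>)) = liminf (\<lambda>n. ennreal (h (Y (r n) \<omega>)))"
      using ae
    proof eventually_elim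
      case (elim \<omega>)
      have "(\<lambda>n. \<bar>Y (r n) \<omega> - Y' \<omega>\<bar>) \<longlonglongrightarrow> 0"
        using tendsto_real_sqrt[OF elim] by simp
      then have "(\<lambda>n. Y (r n) \<omega>) \<longlonglongrightarrow> Y' \<omega>"
        by (simp add: tendsto_rabs_zero_iff LIM_zero_iff)
      then have "(\<lambda>n. h (Y (r n) \<omega>)) \<longlonglongrightarrow> h (Y' \<omega>)"
        by (rule isCont_tendsto_compose[rotated]) (use h in \<open>simp add: continuous_on_eq_continuous_at\<close>)
      then show ?case
        by (intro lim_imp_Liminf[symmetric] tendsto_ennrealI) simp_all
    qed
  qed
  also have "\<dots> \<le> liminf (\<lambda>n. \<integral>\<^sup>+\<omega>. ennreal (h (Y (r n) \<omega>)) \<partial>M)"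
    by (rule nn_integral_liminf) simp
  also have "\<dots> \<le> limsup (\<lambda>n. \<integral>\<^sup>+\<omega>. ennreal (h (Y (r n) \<omega>)) \<partial>M)"
    by (rule Liminf_le_Limsup) simp
  also have "\<dots> \<le> B"
    using eventually_compose_filterlim[OF bound filterlim_subseq[OF r]] by (rule Limsup_bounded)
  finally show ?thesis .
qed

section \<open>Sub-Gaussian random variables\<close>

lemma sub_gaussian_mono:
  assumes "sub_gaussian M Y m s" "s \<le> s'"
  shows "sub_gaussian M Y m s'"
proof -
  have "\<theta>^2 * s^2 / 2 \<le> \<theta>^2 * s'^2 / 2" for \<theta> :: real
    using assms unfolding sub_gaussian_def
    by (intro divide_right_mono mult_left_mono power_mono) auto
  then show ?thesis
    using assms unfolding sub_gaussian_def by (meson exp_le_cancel_iff order_trans)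
qed

lemma sub_gaussian_square_integrable:
  assumes "sub_gaussian M Y 0 s"
  shows "square_integrable M Y"
proof -
  have meas: "Y \<in> borel_measurable M"
    using assms unfolding sub_gaussian_def by auto
  have bound: "integrable M (\<lambda>\<omega>. 4 * (exp (Y \<omega>) + exp (- Y \<omega>)))"
    using assms unfolding sub_gaussian_def
    by (intro integrable_mult_right Bochner_Integration.integrable_add)
       (auto dest: spec[of _ 1] spec[of _ "-1"])
  have le: "(Y \<omega>)^2 \<le> 4 * (exp (Y \<omega>) + exp (- Y \<omega>))" for \<omega>
    using abs_power_le_exp_plus_exp_minus[of 2 "Y \<omega>"] by simp
  have "integrable M (\<lambda>\<omega>. (Y \<omega>)^2)"
    by (rule Bochner_Integration.integrable_bound[OF bound]) (use meas le in auto)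
  with meas show ?thesis
    unfolding square_integrable_def by simp
qed

lemma sub_gaussian_fourth_moment:
  assumes Y: "sub_gaussian M Y 0 s" and s: "s > 0"
  shows "(\<integral>\<^sup>+\<omega>. ennreal ((Y \<omega>)^4) \<partial>M) \<le> ennreal (1024 * s^4)"
proof -
  have int: "integrable M (\<lambda>\<omega>. exp (\<theta> * Y \<omega>))"
    and mgf: "(\<integral>\<omega>. exp (\<theta> * Y \<omega>) \<partial>M) \<le> exp (\<theta>^2 * s^2 / 2)" for \<theta>
    using Y unfolding sub_gaussian_def by auto
  have mgf_half: "(\<integral>\<omega>. exp (\<theta> * Y \<omega>) \<partial>M) \<le> 2" if "\<theta>^2 = 1 / s^2" for \<theta>
    using mgf[of \<theta>] exp_half_le2 that s by simp
  have "(Y \<omega>)^4 \<le> 256 * s^4 * (exp ((1 / s) * Y \<omega>) + exp ((-1 / s) * Y \<omega>))" for \<omega>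
  proof -
    have "s^4 * \<bar>Y \<omega> / s\<bar>^4 \<le> s^4 * (256 * (exp (Y \<omega> / s) + exp (- (Y \<omega> / s))))"
      using abs_power_le_exp_plus_exp_minus[of 4 "Y \<omega> / s"] by (intro mult_left_mono) simp_all
    then show ?thesis
      using s by (simp add: power_divide) (simp add: algebra_simps)
  qed
  then have "(\<integral>\<^sup>+\<omega>. ennreal ((Y \<omega>)^4) \<partial>M)
      \<le> (\<integral>\<^sup>+\<omega>. ennreal (256 * s^4 * (exp ((1 / s) * Y \<omega>) + exp ((-1 / s) * Y \<omega>))) \<partial>M)"
    by (intro nn_integral_mono ennreal_leI)
  also have "\<dots> = ennreal (256 * s^4 * ((\<integral>\<omega>. exp ((1 / s) * Y \<omega>) \<partial>M) + (\<integral>\<omega>. exp ((-1 / s) * Y \<omega>) \<partial>M)))"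
    using int[of "1 / s"] int[of "-1 / s"] by (subst nn_integral_eq_integral) auto
  also have "\<dots> \<le> ennreal (256 * s^4 * (2 + 2))"
    using mgf_half[of "1 / s"] mgf_half[of "-1 / s"] s
    by (intro ennreal_leI mult_left_mono add_mono) (auto simp: power_divide)
  finally show ?thesis by simp
qed

lemma (in prob_space) sub_gaussian_weighted_sum:
  assumes J: "finite J" and indep: "indep_vars (\<lambda>_. borel) Z J"
    and sub_gaussian: "\<And>k. k \<in> J \<Longrightarrow> sub_gaussian M (Z k) 0 (s k)"
  shows "sub_gaussian M (\<lambda>\<omega>. \<Sum>k\<in>J. b k * Z k \<omega>) 0 (sqrt (\<Sum>k\<in>J. (b k * s k)^2))"
  unfolding sub_gaussian_def
proof (intro conjI allI)
  have int: "integrable M (Z k)" and mean: "(\<integral>\<omega>. Z k \<omega> \<partial>M) = 0"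
    and mgf_int: "integrable M (\<lambda>\<omega>. exp (\<theta> * Z k \<omega>))"
    and mgf: "(\<integral>\<omega>. exp (\<theta> * Z k \<omega>) \<partial>M) \<le> exp (\<theta>^2 * (s k)^2 / 2)"
    if "k \<in> J" for k \<theta>
    using sub_gaussian[OF that] unfolding sub_gaussian_def by auto
  show "sqrt (\<Sum>k\<in>J. (b k * s k)^2) \<ge> 0"
    by (intro real_sqrt_ge_zero sum_nonneg) simp
  show "integrable M (\<lambda>\<omega>. \<Sum>k\<in>J. b k * Z k \<omega>)"
    using int by auto
  show "(\<integral>\<omega>. (\<Sum>k\<in>J. b k * Z k \<omega>) \<partial>M) = 0"
    using int mean by simp
  fix \<theta> :: real
  define Y where "Y k \<omega> = exp ((\<theta> * b k) * Z k \<omega>)" for k \<omega>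
  have prod: "exp (\<theta> * ((\<Sum>k\<in>J. b k * Z k \<omega>) - 0)) = (\<Prod>k\<in>J. Y k \<omega>)" for \<omega>
    unfolding Y_def by (simp add: sum_distrib_left exp_sum[OF J] mult.assoc)
  have Y_indep: "indep_vars (\<lambda>_. borel) Y J"
    unfolding Y_def by (rule indep_vars_compose2[OF indep]) auto
  have Y_int: "k \<in> J \<Longrightarrow> integrable M (Y k)" for k
    unfolding Y_def by (rule mgf_int)
  show "integrable M (\<lambda>\<omega>. exp (\<theta> * ((\<Sum>k\<in>J. b k * Z k \<omega>) - 0)))"
    unfolding prod using indep_vars_integrable[OF J Y_indep Y_int] .
  have "(\<integral>\<omega>. exp (\<theta> * ((\<Sum>k\<in>J. b k * Z k \<omega>) - 0)) \<partial>M) = (\<Prod>k\<in>J. \<integral>\<omega>. Y k \<omega> \<partial>M)"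
    unfolding prod using indep_vars_lebesgue_integral[OF J Y_indep Y_int] .
  also have "\<dots> \<le> (\<Prod>k\<in>J. exp ((\<theta> * b k)^2 * (s k)^2 / 2))"
    by (intro prod_mono conjI integral_nonneg_AE AE_I2) (auto simp: Y_def intro: mgf)
  also have "\<dots> = exp (\<theta>^2 * (sqrt (\<Sum>k\<in>J. (b k * s k)^2))^2 / 2)"
    by (simp add: sum_nonneg exp_sum[OF J, symmetric] sum_distrib_left sum_divide_distrib power_mult_distrib
        ac_simps)
  finally show "(\<integral>\<omega>. exp (\<theta> * ((\<Sum>k\<in>J. b k * Z k \<omega>) - 0)) \<partial>M)
      \<le> exp (\<theta>^2 * (sqrt (\<Sum>k\<in>J. (b k * s k)^2))^2 / 2)" .
qed

lemma sub_gaussian_nn_integral_exp_le: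
  assumes "sub_gaussian M Y 0 s"
  shows "(\<integral>\<^sup>+\<omega>. ennreal (exp (\<theta> * Y \<omega>)) \<partial>M) \<le> ennreal (exp (\<theta>^2 * s^2 / 2))"
proof -
  have "integrable M (\<lambda>\<omega>. exp (\<theta> * Y \<omega>))" "(\<integral>\<omega>. exp (\<theta> * Y \<omega>) \<partial>M) \<le> exp (\<theta>^2 * s^2 / 2)"
    using assms unfolding sub_gaussian_def by auto
  then show ?thesis
    by (subst nn_integral_eq_integral) (auto intro: ennreal_leI)
qed

section \<open>Discretization of the time parameter\<close>

lemma increment_square_le_of_lipschitz_bounds:
  fixes g :: "real \<Rightarrow> real \<Rightarrow> real"
  assumes \<epsilon>: "\<epsilon> \<noteq> 0" and c: "c \<in> {0..1}" and t: "t \<in> {0..1}"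
    and time_close: "K'^2 * (c - t)^2 \<le> \<epsilon>^2"
    and g_lip: "\<forall>t\<in>{0..1}. \<forall>x y. g t x - g t y \<le> max \<bar>exp (a * x) - exp (a * y)\<bar> (K * \<bar>x - y\<bar>)"
    and g_time: "\<forall>s\<in>{0..1}. \<forall>t\<in>{0..1}. \<forall>x. \<bar>g t x - g s x\<bar> \<le> K' * \<bar>t - s\<bar>"
  shows "(g c x - g t y)^2 \<le> (2 + K^2) * \<epsilon>^2 + (a^2 + K^2) / \<epsilon>^2 * (x - y)^4
           + 8 * a^2 * \<epsilon>^2 * (exp (4 * a * x) + exp (4 * a * y))"
proof -
  have "\<bar>g c x - g t x\<bar> \<le> K' * \<bar>c - t\<bar>"
    using g_time c t by blast
  then have "\<bar>g c x - g t x\<bar>^2 \<le> (K' * \<bar>c - t\<bar>)^2"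
    by (intro power_mono) auto
  then have time_step: "(g c x - g t x)^2 \<le> \<epsilon>^2"
    using time_close by (simp add: power_mult_distrib)
  have "g t x - g t y \<le> max \<bar>exp (a * x) - exp (a * y)\<bar> (K * \<bar>x - y\<bar>)"
    and "g t y - g t x \<le> max \<bar>exp (a * y) - exp (a * x)\<bar> (K * \<bar>y - x\<bar>)"
    using g_lip t by blast+
  then have space_step: "\<bar>g t x - g t y\<bar> \<le> max \<bar>exp (a * x) - exp (a * y)\<bar> (K * \<bar>x - y\<bar>)"
    by (simp add: abs_minus_commute abs_le_iff)
  show ?thesis
    using time_space_increment_square_le[OF \<epsilon> time_step space_step] by simp
qed

lemma floor_grid_approx:
  fixes m t :: real
  assumes m: "1 \<le> m" and t: "t \<in> {0..1}"
  shows "real_of_int \<lfloor>t * m\<rfloor> / m \<in> {0..1}" and "\<bar>real_of_int \<lfloor>t * m\<rfloor> / m - t\<bar> \<le> 1 / m"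
proof -
  have floor: "real_of_int \<lfloor>t * m\<rfloor> \<le> t * m" "t * m < real_of_int \<lfloor>t * m\<rfloor> + 1"
    by linarith+
  have "t * m \<le> m"
    using t m by (simp add: mult_left_le_one_le)
  with floor have "real_of_int \<lfloor>t * m\<rfloor> \<le> m"
    by linarith
  moreover have "0 \<le> real_of_int \<lfloor>t * m\<rfloor>"
    using t m by simp
  ultimately show "real_of_int \<lfloor>t * m\<rfloor> / m \<in> {0..1}"
    using m by simp
  have "t - real_of_int \<lfloor>t * m\<rfloor> / m = (t * m - real_of_int \<lfloor>t * m\<rfloor>) / m"
    using m by (simp add: field_simps)
  moreover have "0 \<le> t * m - real_of_int \<lfloor>t * m\<rfloor>" "t * m - real_of_int \<lfloor>t * m\<rfloor> \<le> 1"
    using floor by linarith+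
  ultimately have "0 \<le> t - real_of_int \<lfloor>t * m\<rfloor> / m \<and> t - real_of_int \<lfloor>t * m\<rfloor> / m \<le> 1 / m"
    using m by (simp add: divide_right_mono)
  then show "\<bar>real_of_int \<lfloor>t * m\<rfloor> / m - t\<bar> \<le> 1 / m"
    by simp
qed

lemma rounding_to_grid:
  fixes \<epsilon> K' t :: real and L :: nat
  assumes \<epsilon>: "0 < \<epsilon>" "\<epsilon> \<le> 1" and L: "L \<ge> 1" and t: "t \<in> {0..1}"
  defines "m \<equiv> real_of_int \<lceil>max (sqrt (real L) / \<epsilon>) (K'^2 / \<epsilon>^2)\<rceil>"
  defines "c \<equiv> real_of_int \<lfloor>t * m\<rfloor> / m"
  shows "c \<in> {0..1}" and "real L * (c - t)^2 \<le> \<epsilon>^2" and "K'^2 * (c - t)^2 \<le> \<epsilon>^2"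
proof -
  have m_L: "sqrt (real L) / \<epsilon> \<le> m" and m_K': "K'^2 / \<epsilon>^2 \<le> m"
    unfolding m_def by (meson le_of_int_ceiling max.cobounded1 max.cobounded2 order_trans)+
  have "1 \<le> sqrt (real L) / \<epsilon>"
    using L \<epsilon> by (simp add: le_divide_eq order_trans[of _ 1])
  with m_L have m: "1 \<le> m" by linarith
  show "c \<in> {0..1}"
    unfolding c_def using floor_grid_approx(1)[OF m t] .
  have dist: "(c - t)^2 \<le> 1 / m^2"
    using power_mono[OF floor_grid_approx(2)[OF m t], of 2] unfolding c_def by (simp add: power_divide)
  have scaled: "A * (c - t)^2 \<le> \<epsilon>^2" if "0 \<le> A" "A \<le> \<epsilon>^2 * m^2" for A
  proof -
    have "A * (c - t)^2 \<le> (\<epsilon>^2 * m^2) * (1 / m^2)"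
      using that dist by (intro mult_mono) auto
    also have "\<dots> = \<epsilon>^2"
      using m by simp
    finally show ?thesis .
  qed
  have "sqrt (real L) \<le> \<epsilon> * m"
    using m_L \<epsilon> by (simp add: divide_le_eq mult.commute)
  from power_mono[OF this, of 2] show "real L * (c - t)^2 \<le> \<epsilon>^2"
    by (intro scaled) (simp_all add: power_mult_distrib)
  have "K'^2 \<le> \<epsilon>^2 * m"
    using m_K' \<epsilon> by (simp add: divide_le_eq mult.commute)
  also have "\<dots> \<le> \<epsilon>^2 * m^2"
    using m by (intro mult_left_mono) (simp_all add: power2_eq_square)
  finally show "K'^2 * (c - t)^2 \<le> \<epsilon>^2"
    by (intro scaled) simp_all
qed

lemma nn_integral_lipschitz_square_le:
  fixes f :: "('i \<Rightarrow> real) \<Rightarrow> real" and A B :: "'i \<Rightarrow> 'a \<Rightarrow> real"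
  assumes w: "\<forall>i\<in>I. w i \<ge> 0" "(\<Sum>i\<in>I. w i) = 1"
    and f: "\<forall>x y. \<bar>f x - f y\<bar> \<le> (\<Sum>i\<in>I. w i * \<bar>x i - y i\<bar>)"
    and dominated: "\<forall>i\<in>I. \<exists>P\<in>borel_measurable M. (\<forall>\<omega>. (A i \<omega> - B i \<omega>)^2 \<le> P \<omega>)
      \<and> (\<integral>\<^sup>+\<omega>. ennreal (P \<omega>) \<partial>M) \<le> C"
  shows "(\<integral>\<^sup>+\<omega>. ennreal ((f (\<lambda>i. A i \<omega>) - f (\<lambda>i. B i \<omega>))^2) \<partial>M) \<le> C"
proof -
  obtain P where P_meas: "\<And>i. i \<in> I \<Longrightarrow> P i \<in> borel_measurable M"
    and P_dom: "\<And>i \<omega>. i \<in> I \<Longrightarrow> (A i \<omega> - B i \<omega>)^2 \<le> P i \<omega>"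
    and P_int: "\<And>i. i \<in> I \<Longrightarrow> (\<integral>\<^sup>+\<omega>. ennreal (P i \<omega>) \<partial>M) \<le> C"
    using bchoice[OF dominated[unfolded Bex_def]] by blast
  have "(f (\<lambda>i. A i \<omega>) - f (\<lambda>i. B i \<omega>))^2 \<le> (\<Sum>i\<in>I. w i * \<bar>A i \<omega> - B i \<omega>\<bar>)^2" for \<omega>
    using f power_mono[of "\<bar>f (\<lambda>i. A i \<omega>) - f (\<lambda>i. B i \<omega>)\<bar>" _ 2] by simp
  also have "\<dots> \<omega> \<le> (\<Sum>i\<in>I. w i * \<bar>A i \<omega> - B i \<omega>\<bar>^2)" for \<omega>
    by (rule weighted_sum_square_le[OF w])
  also have "\<dots> \<omega> \<le> (\<Sum>i\<in>I. w i * P i \<omega>)" for \<omega>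
    using w P_dom by (intro sum_mono mult_left_mono) auto
  finally have pointwise: "(f (\<lambda>i. A i \<omega>) - f (\<lambda>i. B i \<omega>))^2 \<le> (\<Sum>i\<in>I. w i * P i \<omega>)" for \<omega> .
  have P_nonneg: "i \<in> I \<Longrightarrow> 0 \<le> P i \<omega>" for i \<omega>
    using order_trans[OF zero_le_power2 P_dom] .
  have "ennreal ((f (\<lambda>i. A i \<omega>) - f (\<lambda>i. B i \<omega>))^2) \<le> (\<Sum>i\<in>I. ennreal (w i) * ennreal (P i \<omega>))"
    for \<omega>
  proof -
    have "ennreal ((f (\<lambda>i. A i \<omega>) - f (\<lambda>i. B i \<omega>))^2) \<le> ennreal (\<Sum>i\<in>I. w i * P i \<omega>)"
      using pointwise by (rule ennreal_leI)
    also have "\<dots> = (\<Sum>i\<in>I. ennreal (w i) * ennreal (P i \<omega>))"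
      using w(1) P_nonneg by (simp add: sum_ennreal[symmetric] ennreal_mult')
    finally show ?thesis .
  qed
  then have "(\<integral>\<^sup>+\<omega>. ennreal ((f (\<lambda>i. A i \<omega>) - f (\<lambda>i. B i \<omega>))^2) \<partial>M)
      \<le> (\<integral>\<^sup>+\<omega>. (\<Sum>i\<in>I. ennreal (w i) * ennreal (P i \<omega>)) \<partial>M)"
    by (rule nn_integral_mono)
  also have "\<dots> = (\<Sum>i\<in>I. ennreal (w i) * (\<integral>\<^sup>+\<omega>. ennreal (P i \<omega>) \<partial>M))"
    using P_meas by (simp add: nn_integral_sum nn_integral_cmult)
  also have "\<dots> \<le> (\<Sum>i\<in>I. ennreal (w i) * C)"
    using P_int by (intro sum_mono mult_left_mono) auto
  also have "\<dots> = C"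
    using w by (simp add: sum_distrib_right[symmetric] sum_ennreal)
  finally show ?thesis .
qed

section \<open>Processes with sub-Gaussian Karhunen-Loeve coefficients\<close>

locale KL_process = prob_space M for M :: "'a measure" +
  fixes X :: "real \<Rightarrow> 'a \<Rightarrow> real" and e :: "nat \<Rightarrow> real \<Rightarrow> real"
    and lam :: "nat \<Rightarrow> real" and G :: "nat \<Rightarrow> real"
  assumes joint_meas: "(\<lambda>(t, \<omega>). X t \<omega>) \<in> borel_measurable (restrict_space lborel {0..1} \<Otimes>\<^sub>M M)"
    and centered: "\<forall>t\<in>{0..1}. integrable M (X t) \<and> integrable M (\<lambda>\<omega>. (X t \<omega>)^2)
                      \<and> (\<integral>\<omega>. X t \<omega> \<partial>M) = 0"
    and cov_cont: "continuous_on ({0..1} \<times> {0..1}) (\<lambda>(s, t). \<integral>\<omega>. X s \<omega> * X t \<omega> \<partial>M)"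
    and eigen: "\<forall>k\<ge>1. \<forall>t\<in>{0..1}.
                  (LBINT s=0..1. (\<integral>\<omega>. X s \<omega> * X t \<omega> \<partial>M) * e k s) = lam k * e k t"
    and orthonormal: "\<forall>j\<ge>1. \<forall>k\<ge>1. (LBINT s=0..1. e j s * e k s) = (if j = k then 1 else 0)"
    and lam_nonneg: "\<forall>k\<ge>1. lam k \<ge> 0"
    and KL_conv: "\<forall>\<delta>>0. \<exists>N. \<forall>n\<ge>N. \<forall>t\<in>{0..1}.
                  (\<integral>\<omega>. ((\<Sum>k=1..n. KL_coeff X e k \<omega> * e k t) - X t \<omega>)^2 \<partial>M) \<le> \<delta>"
    and indep: "indep_vars (\<lambda>_. borel) (KL_coeff X e) {1..}"
    and subg: "\<forall>k\<ge>1. sub_gaussian M (KL_coeff X e k) 0 (sqrt (lam k))"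
    and lip: "\<forall>k\<ge>1. \<forall>s\<in>{0..1}. \<forall>t\<in>{0..1}. \<bar>e k s - e k t\<bar> \<le> G k * \<bar>s - t\<bar>"
begin

abbreviation "Z \<equiv> KL_coeff X e"
abbreviation "Leb01 \<equiv> restrict_space lborel {0..1::real}"

lemma X_square_integrable: "s \<in> {0..1} \<Longrightarrow> square_integrable M (X s)"
  using centered unfolding square_integrable_def by (auto intro: borel_measurable_integrable)

lemma X_measurable [measurable]: "s \<in> {0..1} \<Longrightarrow> X s \<in> borel_measurable M"
  using X_square_integrable square_integrable_def by blast

lemma Z_square_integrable: "k \<ge> 1 \<Longrightarrow> square_integrable M (Z k)"
  using subg sub_gaussian_square_integrable by blast

lemma second_moment_bounded: "\<exists>V. \<forall>s\<in>{0..1}. (\<integral>\<omega>. (X s \<omega>)^2 \<partial>M) \<le> V"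
proof -
  let ?var = "(\<lambda>(s, t). \<integral>\<omega>. X s \<omega> * X t \<omega> \<partial>M) \<circ> (\<lambda>s. (s, s))"
  have "continuous_on {0..1::real} ?var"
    by (rule continuous_on_compose[OF _ continuous_on_subset[OF cov_cont]])
       (auto intro!: continuous_intros)
  then have "compact (?var ` {0..1})"
    by (intro compact_continuous_image) auto
  then obtain V where "\<forall>y \<in> ?var ` {0..1}. norm y \<le> V"
    by (meson bounded_iff compact_imp_bounded)
  then show ?thesis
    by (intro exI[of _ V]) (auto simp: power2_eq_square)
qed

lemma e_lipschitz: "k \<ge> 1 \<Longrightarrow> lipschitz_on (G k) {0..1} (e k)"
  using lip lip[rule_format, of k 1 0] by (auto simp: lipschitz_on_def dist_real_def)

lemma e_bounded:
  assumes "k \<ge> 1" "s \<in> {0..1}"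
  shows "\<bar>e k s\<bar> \<le> \<bar>e k 0\<bar> + G k"
proof -
  have "G k \<ge> 0"
    using lip[rule_format, of k 1 0] assms by auto
  then show ?thesis
    using lip[rule_format, of k s 0] mult_left_le[of s "G k"] assms by auto
qed

lemma e_measurable [measurable]: "k \<ge> 1 \<Longrightarrow> e k \<in> borel_measurable Leb01"
  using borel_measurable_continuous_on_restrict[OF lipschitz_on_continuous_on[OF e_lipschitz]]
  by (simp cong: measurable_cong_sets add: sets_restrict_space_cong[OF sets_lborel])

lemma integral_Leb01: "integral\<^sup>L Leb01 h = (LBINT s=0..1. h s)"
  using interval_integral_Icc[of 0 1 h]
  by (simp add: set_lebesgue_integral_def integral_restrict_space zero_ereal_def one_ereal_def)

lemma Z_eq_integral_Leb01: "Z k \<omega> = integral\<^sup>L Leb01 (\<lambda>s. X s \<omega> * e k s)"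
  by (simp add: KL_coeff_def integral_Leb01)

lemma finite_measure_Leb01: "finite_measure Leb01"
  by (rule finite_measureI) (simp add: emeasure_restrict_space space_restrict_space)

lemma pair_sigma_finite_Leb01: "pair_sigma_finite Leb01 M"
proof -
  interpret Leb01: finite_measure Leb01
    by (rule finite_measure_Leb01)
  show ?thesis
    by unfold_locales
qed

lemma X_e_section_bound:
  assumes Y: "square_integrable M Y" and k: "k \<ge> 1" and s: "s \<in> {0..1}"
    and V: "\<forall>s\<in>{0..1}. (\<integral>\<omega>. (X s \<omega>)^2 \<partial>M) \<le> V"
  shows "(\<integral>\<omega>. norm (X s \<omega> * e k s * Y \<omega>) \<partial>M) \<le> (\<bar>e k 0\<bar> + G k) * (V + (\<integral>\<omega>. (Y \<omega>)^2 \<partial>M))"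
proof -
  define B where "B = \<bar>e k 0\<bar> + G k"
  have "(\<integral>\<omega>. norm (X s \<omega> * e k s * Y \<omega>) \<partial>M) \<le> (\<integral>\<omega>. B * ((X s \<omega>)^2 + (Y \<omega>)^2) \<partial>M)"
  proof (rule integral_mono)
    have "integrable M (\<lambda>\<omega>. (X s \<omega> * Y \<omega>) * e k s)"
      by (intro integrable_mult_left square_integrable_mult_integrable X_square_integrable s Y)
    then show "integrable M (\<lambda>\<omega>. norm (X s \<omega> * e k s * Y \<omega>))"
      by (simp add: ac_simps)
    show "integrable M (\<lambda>\<omega>. B * ((X s \<omega>)^2 + (Y \<omega>)^2))"
      using X_square_integrable[OF s] Y unfolding square_integrable_def by auto
    fix \<omega>
    have "\<bar>X s \<omega> * Y \<omega>\<bar> * \<bar>e k s\<bar> \<le> ((X s \<omega>)^2 + (Y \<omega>)^2) * B"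
      using e_bounded[OF k s] abs_mult_le_sum_squares[of "X s \<omega>" "Y \<omega>"] unfolding B_def
      by (intro mult_mono) auto
    then show "norm (X s \<omega> * e k s * Y \<omega>) \<le> B * ((X s \<omega>)^2 + (Y \<omega>)^2)"
      by (simp add: abs_mult ac_simps)
  qed
  also have "\<dots> = B * ((\<integral>\<omega>. (X s \<omega>)^2 \<partial>M) + (\<integral>\<omega>. (Y \<omega>)^2 \<partial>M))"
    using X_square_integrable[OF s] Y unfolding square_integrable_def by simp
  also have "\<dots> \<le> B * (V + (\<integral>\<omega>. (Y \<omega>)^2 \<partial>M))"
    using V s e_bounded[OF k s] unfolding B_def by (intro mult_left_mono) auto
  finally show ?thesis
    unfolding B_def .
qed

lemma X_e_product_integrable:
  assumes Y: "square_integrable M Y" and k: "k \<ge> 1"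
  shows "integrable (Leb01 \<Otimes>\<^sub>M M) (\<lambda>(s, \<omega>). X s \<omega> * e k s * Y \<omega>)"
proof -
  interpret Leb01: finite_measure Leb01
    by (rule finite_measure_Leb01)
  interpret pair_sigma_finite Leb01 M
    by (rule pair_sigma_finite_Leb01)
  obtain V where V: "\<forall>s\<in>{0..1}. (\<integral>\<omega>. (X s \<omega>)^2 \<partial>M) \<le> V"
    using second_moment_bounded by blast
  have [measurable]: "Y \<in> borel_measurable M" "e k \<in> borel_measurable Leb01"
    using Y k square_integrable_def by auto
  have [measurable]: "(\<lambda>p. X (fst p) (snd p)) \<in> borel_measurable (Leb01 \<Otimes>\<^sub>M M)"
    using joint_meas by (simp add: split_beta')
  show ?thesis
  proof (subst Fubini_integrable)
    show "(\<lambda>(s, \<omega>). X s \<omega> * e k s * Y \<omega>) \<in> borel_measurable (Leb01 \<Otimes>\<^sub>M M)"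
      unfolding split_beta' by measurable
    show "integrable Leb01 (\<lambda>s. \<integral>\<omega>. norm ((case (s, \<omega>) of (s, \<omega>) \<Rightarrow> X s \<omega> * e k s * Y \<omega>)) \<partial>M)"
      using X_e_section_bound[OF Y k _ V]
      by (intro Leb01.integrable_const_bound[where B="(\<bar>e k 0\<bar> + G k) * (V + (\<integral>\<omega>. (Y \<omega>)^2 \<partial>M))"])
         (auto simp: space_restrict_space intro!: borel_measurable_lebesgue_integral)
    have "integrable M (\<lambda>\<omega>. (X s \<omega> * Y \<omega>) * e k s)" if "s \<in> {0..1}" for s
      by (intro integrable_mult_left square_integrable_mult_integrable X_square_integrable that Y)
    then show "AE s in Leb01. integrable M (\<lambda>\<omega>. case (s, \<omega>) of (s, \<omega>) \<Rightarrow> X s \<omega> * e k s * Y \<omega>)"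
      by (auto simp: space_restrict_space ac_simps)
  qed simp
qed

lemma KL_coeff_cross_moment:
  assumes Y: "square_integrable M Y" and k: "k \<ge> 1"
  shows "(\<integral>\<omega>. Y \<omega> * Z k \<omega> \<partial>M) = integral\<^sup>L Leb01 (\<lambda>s. (\<integral>\<omega>. X s \<omega> * Y \<omega> \<partial>M) * e k s)"
proof -
  interpret pair_sigma_finite Leb01 M
    by (rule pair_sigma_finite_Leb01)
  have "(\<integral>\<omega>. Y \<omega> * Z k \<omega> \<partial>M) = (\<integral>\<omega>. (\<integral>s. X s \<omega> * e k s * Y \<omega> \<partial>Leb01) \<partial>M)"
    by (simp add: Z_eq_integral_Leb01 mult.commute)
  also have "\<dots> = (\<integral>s. (\<integral>\<omega>. X s \<omega> * e k s * Y \<omega> \<partial>M) \<partial>Leb01)"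
    using Fubini_integral[OF X_e_product_integrable[OF Y k]] by simp
  also have "\<dots> = integral\<^sup>L Leb01 (\<lambda>s. (\<integral>\<omega>. X s \<omega> * Y \<omega> \<partial>M) * e k s)"
  proof (rule Bochner_Integration.integral_cong[OF refl])
    fix s
    have "(\<lambda>\<omega>. X s \<omega> * e k s * Y \<omega>) = (\<lambda>\<omega>. (X s \<omega> * Y \<omega>) * e k s)"
      by (simp add: ac_simps)
    then show "(\<integral>\<omega>. X s \<omega> * e k s * Y \<omega> \<partial>M) = (\<integral>\<omega>. X s \<omega> * Y \<omega> \<partial>M) * e k s"
      by simp
  qed
  finally show ?thesis .
qed

lemma X_KL_coeff_covariance:
  "k \<ge> 1 \<Longrightarrow> t \<in> {0..1} \<Longrightarrow> (\<integral>\<omega>. X t \<omega> * Z k \<omega> \<partial>M) = lam k * e k t"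
  using KL_coeff_cross_moment[OF X_square_integrable] eigen by (simp add: integral_Leb01)

lemma KL_coeff_covariance:
  assumes "j \<ge> 1" "k \<ge> 1"
  shows "(\<integral>\<omega>. Z k \<omega> * Z j \<omega> \<partial>M) = (if j = k then lam k else 0)"
proof -
  have "(\<integral>\<omega>. Z k \<omega> * Z j \<omega> \<partial>M) = integral\<^sup>L Leb01 (\<lambda>s. (\<integral>\<omega>. X s \<omega> * Z k \<omega> \<partial>M) * e j s)"
    by (rule KL_coeff_cross_moment[OF Z_square_integrable[OF assms(2)] assms(1)])
  also have "\<dots> = integral\<^sup>L Leb01 (\<lambda>s. lam k * (e k s * e j s))"
    using assms by (intro Bochner_Integration.integral_cong) (auto simp: space_restrict_space X_KL_coeff_covariance)
  also have "\<dots> = (if j = k then lam k else 0)"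
    using orthonormal assms by (simp add: integral_Leb01)
  finally show ?thesis .
qed

definition KL_trunc :: "nat \<Rightarrow> real \<Rightarrow> 'a \<Rightarrow> real" where
  "KL_trunc n t \<omega> = (\<Sum>k=1..n. Z k \<omega> * e k t)"

lemma KL_trunc_square_integrable: "square_integrable M (KL_trunc n t)"
  unfolding KL_trunc_def
  using square_integrable_cmult[OF Z_square_integrable, of _ "e _ t"]
  by (intro square_integrable_sum) (simp add: mult.commute)

lemma KL_trunc_measurable [measurable]: "KL_trunc n t \<in> borel_measurable M"
  using KL_trunc_square_integrable square_integrable_def by blast

lemma KL_trunc_cross_moment:
  assumes "square_integrable M Y"
  shows "(\<integral>\<omega>. KL_trunc n t \<omega> * Y \<omega> \<partial>M) = (\<Sum>k=1..n. e k t * (\<integral>\<omega>. Y \<omega> * Z k \<omega> \<partial>M))"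
proof -
  have "(\<lambda>\<omega>. KL_trunc n t \<omega> * Y \<omega>) = (\<lambda>\<omega>. \<Sum>k=1..n. e k t * (Y \<omega> * Z k \<omega>))"
    unfolding KL_trunc_def sum_distrib_right by (simp add: ac_simps)
  moreover have "integrable M (\<lambda>\<omega>. Y \<omega> * Z k \<omega>)" if "k \<in> {1..n}" for k
    using that by (intro square_integrable_mult_integrable assms Z_square_integrable) simp
  ultimately show ?thesis
    by simp
qed

lemma KL_trunc_error:
  assumes t: "t \<in> {0..1}"
  shows "(\<integral>\<omega>. (KL_trunc n t \<omega> - X t \<omega>)^2 \<partial>M)
    = (\<integral>\<omega>. (X t \<omega>)^2 \<partial>M) - (\<Sum>k=1..n. lam k * (e k t)^2)"
proof -
  have trunc_trunc: "(\<integral>\<omega>. KL_trunc n t \<omega> * KL_trunc n t \<omega> \<partial>M) = (\<Sum>k=1..n. lam k * (e k t)^2)"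
  proof -
    have "(\<integral>\<omega>. KL_trunc n t \<omega> * KL_trunc n t \<omega> \<partial>M)
        = (\<Sum>k=1..n. e k t * (\<integral>\<omega>. KL_trunc n t \<omega> * Z k \<omega> \<partial>M))"
      by (rule KL_trunc_cross_moment[OF KL_trunc_square_integrable])
    also have "\<dots> = (\<Sum>k=1..n. e k t * (\<Sum>j=1..n. e j t * (if j = k then lam k else 0)))"
      by (intro sum.cong refl arg_cong2[where f = "(*)"])
         (simp add: KL_trunc_cross_moment[OF Z_square_integrable] KL_coeff_covariance)
    also have "\<dots> = (\<Sum>k=1..n. lam k * (e k t)^2)"
      by (intro sum.cong refl) (simp add: if_distrib power2_eq_square cong: if_cong)
    finally show ?thesis .
  qed
  have "(\<integral>\<omega>. KL_trunc n t \<omega> * X t \<omega> \<partial>M) = (\<Sum>k=1..n. e k t * (\<integral>\<omega>. X t \<omega> * Z k \<omega> \<partial>M))"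
    by (rule KL_trunc_cross_moment[OF X_square_integrable[OF t]])
  also have "\<dots> = (\<Sum>k=1..n. lam k * (e k t)^2)"
    using t by (intro sum.cong refl) (simp add: X_KL_coeff_covariance power2_eq_square)
  finally have trunc_X: "(\<integral>\<omega>. KL_trunc n t \<omega> * X t \<omega> \<partial>M) = (\<Sum>k=1..n. lam k * (e k t)^2)" .
  have expand: "(\<lambda>\<omega>. (KL_trunc n t \<omega> - X t \<omega>)^2)
      = (\<lambda>\<omega>. KL_trunc n t \<omega> * KL_trunc n t \<omega> - 2 * (KL_trunc n t \<omega> * X t \<omega>) + (X t \<omega>)^2)"
    by (auto simp: power2_eq_square algebra_simps)
  have i1: "integrable M (\<lambda>\<omega>. KL_trunc n t \<omega> * KL_trunc n t \<omega>)"
    and i2: "integrable M (\<lambda>\<omega>. KL_trunc n t \<omega> * X t \<omega>)"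
    and i3: "integrable M (\<lambda>\<omega>. (X t \<omega>)^2)"
    using KL_trunc_square_integrable X_square_integrable[OF t]
    by (auto intro: square_integrable_mult_integrable simp: square_integrable_def)
  have split_X: "(\<integral>\<omega>. (KL_trunc n t \<omega> - X t \<omega>)^2 \<partial>M)
      = (\<integral>\<omega>. KL_trunc n t \<omega> * KL_trunc n t \<omega> - 2 * (KL_trunc n t \<omega> * X t \<omega>) \<partial>M)
        + (\<integral>\<omega>. (X t \<omega>)^2 \<partial>M)"
    unfolding expand by (rule Bochner_Integration.integral_add) (use i1 i2 i3 in auto)
  have split_trunc: "(\<integral>\<omega>. KL_trunc n t \<omega> * KL_trunc n t \<omega> - 2 * (KL_trunc n t \<omega> * X t \<omega>) \<partial>M)
      = (\<integral>\<omega>. KL_trunc n t \<omega> * KL_trunc n t \<omega> \<partial>M) - 2 * (\<integral>\<omega>. KL_trunc n t \<omega> * X t \<omega> \<partial>M)"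
    using i1 i2 by (subst Bochner_Integration.integral_diff) auto
  show ?thesis
    using split_X split_trunc trunc_trunc trunc_X by linarith
qed

lemma trunc_index_error:
  assumes "\<epsilon> > 0" "t \<in> {0..1}"
  shows "(\<integral>\<omega>. (KL_trunc (trunc_index M X e \<epsilon>) t \<omega> - X t \<omega>)^2 \<partial>M) \<le> \<epsilon>^2"
proof -
  obtain N where "\<forall>n\<ge>N. \<forall>t\<in>{0..1}. (\<integral>\<omega>. ((\<Sum>k=1..n. Z k \<omega> * e k t) - X t \<omega>)^2 \<partial>M) \<le> \<epsilon>^2"
    using KL_conv assms by (meson zero_less_power)
  then have "\<exists>L. \<forall>t\<in>{0..1}. (\<integral>\<omega>. ((\<Sum>k=1..L. Z k \<omega> * e k t) - X t \<omega>)^2 \<partial>M) \<le> \<epsilon>^2"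
    by blast
  from LeastI_ex[OF this] show ?thesis
    using assms(2) unfolding trunc_index_def KL_trunc_def by blast
qed

lemma KL_trunc_L2_tendsto:
  assumes t: "t \<in> {0..1}"
  shows "(\<lambda>n. \<integral>\<omega>. (KL_trunc n t \<omega> - X t \<omega>)^2 \<partial>M) \<longlonglongrightarrow> 0"
proof (rule LIMSEQ_I)
  fix r :: real
  assume "r > 0"
  then obtain N where N: "\<forall>n\<ge>N. \<forall>t\<in>{0..1}. (\<integral>\<omega>. (KL_trunc n t \<omega> - X t \<omega>)^2 \<partial>M) \<le> r / 2"
    using KL_conv unfolding KL_trunc_def by (meson half_gt_zero)
  show "\<exists>N. \<forall>n\<ge>N. norm ((\<integral>\<omega>. (KL_trunc n t \<omega> - X t \<omega>)^2 \<partial>M) - 0) < r"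
  proof (intro exI allI impI)
    fix n
    assume "N \<le> n"
    then have "(\<integral>\<omega>. (KL_trunc n t \<omega> - X t \<omega>)^2 \<partial>M) \<le> r / 2"
      using N t by blast
    then show "norm ((\<integral>\<omega>. (KL_trunc n t \<omega> - X t \<omega>)^2 \<partial>M) - 0) < r"
      using \<open>r > 0\<close> by simp
  qed
qed

lemma eigen_sum_le_second_moment:
  "t \<in> {0..1} \<Longrightarrow> (\<Sum>k=1..n. lam k * (e k t)^2) \<le> (\<integral>\<omega>. (X t \<omega>)^2 \<partial>M)"
  using KL_trunc_error[of t n] integral_nonneg_AE[of "\<lambda>\<omega>. (KL_trunc n t \<omega> - X t \<omega>)^2" M]
  by simp

lemma eigen_tail_le_trunc_error:
  assumes t: "t \<in> {0..1}" and "L \<le> n"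
  shows "(\<Sum>k\<in>{Suc L..n}. lam k * (e k t)^2) \<le> (\<integral>\<omega>. (KL_trunc L t \<omega> - X t \<omega>)^2 \<partial>M)"
proof -
  have "(\<Sum>k=1..n. lam k * (e k t)^2)
      = (\<Sum>k=1..L. lam k * (e k t)^2) + (\<Sum>k\<in>{Suc L..n}. lam k * (e k t)^2)"
    using \<open>L \<le> n\<close> by (subst sum.union_disjoint[symmetric]) (auto intro: sum.cong)
  then show ?thesis
    using KL_trunc_error[OF t, of n] KL_trunc_error[OF t, of L]
      integral_nonneg_AE[of "\<lambda>\<omega>. (KL_trunc n t \<omega> - X t \<omega>)^2" M]
    by simp
qed

lemma weighted_KL_coeff_sum_sub_gaussian:
  "sub_gaussian M (\<lambda>\<omega>. \<Sum>k=1..n. b k * Z k \<omega>) 0 (sqrt (\<Sum>k=1..n. (b k)^2 * lam k))"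
proof -
  have "sub_gaussian M (\<lambda>\<omega>. \<Sum>k=1..n. b k * Z k \<omega>) 0 (sqrt (\<Sum>k=1..n. (b k * sqrt (lam k))^2))"
    using subg by (intro sub_gaussian_weighted_sum indep_vars_subset[OF indep]) auto
  moreover have "(\<Sum>k=1..n. (b k * sqrt (lam k))^2) = (\<Sum>k=1..n. (b k)^2 * lam k)"
    using lam_nonneg by (intro sum.cong) (auto simp: power_mult_distrib)
  ultimately show ?thesis
    by simp
qed

lemma eigen_head_increment_le:
  assumes CM: "\<forall>k\<ge>1. lam k * (G k)^2 \<le> CM" and c: "c \<in> {0..1}" and t: "t \<in> {0..1}"
  shows "(\<Sum>k=1..L. lam k * (e k c - e k t)^2) \<le> CM * (real L * (c - t)^2)"
proof -
  have "lam k * (e k c - e k t)^2 \<le> CM * (c - t)^2" if "k \<in> {1..L}" for k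
  proof -
    have "\<bar>e k c - e k t\<bar>^2 \<le> (G k * \<bar>c - t\<bar>)^2"
      using lip that c t by (intro power_mono) auto
    then have "lam k * (e k c - e k t)^2 \<le> lam k * ((G k)^2 * (c - t)^2)"
      using lam_nonneg that by (intro mult_left_mono) (auto simp: power_mult_distrib)
    also have "\<dots> \<le> CM * (c - t)^2"
      using CM that by (simp add: mult.assoc[symmetric] mult_right_mono)
    finally show ?thesis .
  qed
  then have "(\<Sum>k=1..L. lam k * (e k c - e k t)^2) \<le> (\<Sum>k=1..L. CM * (c - t)^2)"
    by (rule sum_mono)
  then show ?thesis
    by (simp add: ac_simps)
qed

lemma eigen_tail_increment_le:
  assumes c: "c \<in> {0..1}" and t: "t \<in> {0..1}" and "L \<le> n"
  shows "(\<Sum>k\<in>{Suc L..n}. lam k * (e k c - e k t)^2)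
    \<le> 2 * (\<integral>\<omega>. (KL_trunc L c \<omega> - X c \<omega>)^2 \<partial>M) + 2 * (\<integral>\<omega>. (KL_trunc L t \<omega> - X t \<omega>)^2 \<partial>M)"
proof -
  have "lam k * (e k c - e k t)^2 \<le> 2 * (lam k * (e k c)^2) + 2 * (lam k * (e k t)^2)"
    if "k \<in> {Suc L..n}" for k
  proof -
    have "(e k c - e k t)^2 \<le> 2 * (e k c)^2 + 2 * (e k t)^2"
      using zero_le_power2[of "e k c + e k t"] by (simp add: power2_eq_square algebra_simps)
    then have "lam k * (e k c - e k t)^2 \<le> lam k * (2 * (e k c)^2 + 2 * (e k t)^2)"
      using lam_nonneg that by (intro mult_left_mono) auto
    then show ?thesis
      by (simp add: algebra_simps)
  qed
  then have "(\<Sum>k\<in>{Suc L..n}. lam k * (e k c - e k t)^2)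
      \<le> (\<Sum>k\<in>{Suc L..n}. 2 * (lam k * (e k c)^2) + 2 * (lam k * (e k t)^2))"
    by (rule sum_mono)
  also have "\<dots> = 2 * (\<Sum>k\<in>{Suc L..n}. lam k * (e k c)^2) + 2 * (\<Sum>k\<in>{Suc L..n}. lam k * (e k t)^2)"
    by (simp add: sum.distrib sum_distrib_left)
  also have "\<dots> \<le> 2 * (\<integral>\<omega>. (KL_trunc L c \<omega> - X c \<omega>)^2 \<partial>M) + 2 * (\<integral>\<omega>. (KL_trunc L t \<omega> - X t \<omega>)^2 \<partial>M)"
    using eigen_tail_le_trunc_error[OF c \<open>L \<le> n\<close>] eigen_tail_le_trunc_error[OF t \<open>L \<le> n\<close>]
    by (intro add_mono mult_left_mono) auto
  finally show ?thesis .
qed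

lemma eigen_bound_nonneg:
  assumes "\<forall>k\<ge>1. lam k * (G k)^2 \<le> CM"
  shows "CM \<ge> 0"
proof -
  have "0 \<le> lam 1 * (G 1)^2"
    using lam_nonneg by simp
  then show ?thesis
    using assms[rule_format, of 1] by simp
qed

lemma increment_eigen_sum_le:
  assumes CM: "\<forall>k\<ge>1. lam k * (G k)^2 \<le> CM" and \<epsilon>: "\<epsilon> > 0"
    and c: "c \<in> {0..1}" and t: "t \<in> {0..1}"
    and close: "real (trunc_index M X e \<epsilon>) * (c - t)^2 \<le> \<epsilon>^2"
    and n: "trunc_index M X e \<epsilon> \<le> n"
  shows "(\<Sum>k=1..n. lam k * (e k c - e k t)^2) \<le> (CM + 4) * \<epsilon>^2"
proof -
  define L where "L = trunc_index M X e \<epsilon>"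
  have "CM * (real L * (c - t)^2) \<le> CM * \<epsilon>^2"
    using close eigen_bound_nonneg[OF CM] unfolding L_def by (intro mult_left_mono)
  then have head: "(\<Sum>k=1..L. lam k * (e k c - e k t)^2) \<le> CM * \<epsilon>^2"
    by (rule order_trans[OF eigen_head_increment_le[OF CM c t]])
  have tail: "(\<Sum>k\<in>{Suc L..n}. lam k * (e k c - e k t)^2) \<le> 4 * \<epsilon>^2"
    using eigen_tail_increment_le[OF c t, of L n] n
      trunc_index_error[OF \<epsilon> c] trunc_index_error[OF \<epsilon> t] unfolding L_def by linarith
  have "(\<Sum>k=1..n. lam k * (e k c - e k t)^2)
      = (\<Sum>k=1..L. lam k * (e k c - e k t)^2) + (\<Sum>k\<in>{Suc L..n}. lam k * (e k c - e k t)^2)"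
    using n unfolding L_def by (subst sum.union_disjoint[symmetric]) (auto intro: sum.cong)
  with head tail show ?thesis
    by (simp add: algebra_simps)
qed

lemma KL_trunc_increment_eq: "KL_trunc n c \<omega> - KL_trunc n t \<omega> = (\<Sum>k=1..n. (e k c - e k t) * Z k \<omega>)"
  by (simp add: KL_trunc_def algebra_simps flip: sum_subtractf)

lemma X_increment_fourth_moment:
  assumes CM: "\<forall>k\<ge>1. lam k * (G k)^2 \<le> CM" and \<epsilon>: "\<epsilon> > 0"
    and c: "c \<in> {0..1}" and t: "t \<in> {0..1}"
    and close: "real (trunc_index M X e \<epsilon>) * (c - t)^2 \<le> \<epsilon>^2"
  shows "(\<integral>\<^sup>+\<omega>. ennreal ((X c \<omega> - X t \<omega>)^4) \<partial>M) \<le> ennreal (1024 * ((CM + 4) * \<epsilon>^2)^2)"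
proof -
  define \<sigma> where "\<sigma> = sqrt ((CM + 4) * \<epsilon>^2)"
  have "CM \<ge> 0"
    using CM by (rule eigen_bound_nonneg)
  then have \<sigma>: "\<sigma> > 0" "\<sigma>^2 = (CM + 4) * \<epsilon>^2"
    using \<epsilon> unfolding \<sigma>_def by simp_all
  have trunc_err: "square_integrable M (\<lambda>\<omega>. KL_trunc n s \<omega> - X s \<omega>)" if "s \<in> {0..1}" for n s
    using that by (intro square_integrable_diff KL_trunc_square_integrable X_square_integrable)
  have trunc_bound: "(\<integral>\<^sup>+\<omega>. ennreal ((KL_trunc n c \<omega> - KL_trunc n t \<omega>)^4) \<partial>M) \<le> ennreal (1024 * \<sigma>^4)"
    if n: "trunc_index M X e \<epsilon> \<le> n" for n
  proof (rule sub_gaussian_fourth_moment[OF _ \<sigma>(1)])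
    have "sqrt (\<Sum>k=1..n. (e k c - e k t)^2 * lam k) \<le> \<sigma>"
      unfolding \<sigma>_def using increment_eigen_sum_le[OF CM \<epsilon> c t close n]
      by (simp add: mult.commute)
    then show "sub_gaussian M (\<lambda>\<omega>. KL_trunc n c \<omega> - KL_trunc n t \<omega>) 0 \<sigma>"
      unfolding KL_trunc_increment_eq by (rule sub_gaussian_mono[OF weighted_KL_coeff_sum_sub_gaussian])
  qed
  have "(\<integral>\<^sup>+\<omega>. ennreal ((X c \<omega> - X t \<omega>)^4) \<partial>M) \<le> ennreal (1024 * \<sigma>^4)"
  proof (rule nn_integral_le_of_L2_tendsto[where Y = "\<lambda>n \<omega>. KL_trunc n c \<omega> - KL_trunc n t \<omega>"
        and h = "\<lambda>x. x^4"])
    show "square_integrable M (\<lambda>\<omega>. KL_trunc n c \<omega> - KL_trunc n t \<omega> - (X c \<omega> - X t \<omega>))" for n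
      using square_integrable_diff[OF trunc_err[OF c] trunc_err[OF t], of n n] by (simp add: algebra_simps)
    show "(\<lambda>n. \<integral>\<omega>. (KL_trunc n c \<omega> - KL_trunc n t \<omega> - (X c \<omega> - X t \<omega>))^2 \<partial>M) \<longlonglongrightarrow> 0"
      using L2_tendsto_diff[OF trunc_err[OF c] trunc_err[OF t] KL_trunc_L2_tendsto[OF c]
          KL_trunc_L2_tendsto[OF t]] .
    show "eventually (\<lambda>n. (\<integral>\<^sup>+\<omega>. ennreal ((KL_trunc n c \<omega> - KL_trunc n t \<omega>)^4) \<partial>M)
        \<le> ennreal (1024 * \<sigma>^4)) sequentially"
      using eventually_ge_at_top by (rule eventually_mono) (rule trunc_bound)
  qed (auto intro: continuous_intros)
  also have "\<sigma>^4 = ((CM + 4) * \<epsilon>^2)^2"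
    using \<sigma>(2) by (metis power2_eq_square power4_eq_xxxx mult.assoc)
  finally show ?thesis .
qed

lemma X_exp_moment:
  assumes V: "\<forall>s\<in>{0..1}. (\<integral>\<omega>. (X s \<omega>)^2 \<partial>M) \<le> V" and s: "s \<in> {0..1}"
  shows "(\<integral>\<^sup>+\<omega>. ennreal (exp (\<theta> * X s \<omega>)) \<partial>M) \<le> ennreal (exp (\<theta>^2 * V / 2))"
proof (rule nn_integral_le_of_L2_tendsto[where Y = "\<lambda>n. KL_trunc n s" and h = "\<lambda>x. exp (\<theta> * x)"])
  have "V \<ge> 0"
    using V s order_trans[OF integral_nonneg_AE[of "\<lambda>\<omega>. (X s \<omega>)^2" M]] by auto
  moreover have "sub_gaussian M (\<lambda>\<omega>. \<Sum>k=1..n. e k s * Z k \<omega>) 0 (sqrt V)" for n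
  proof (rule sub_gaussian_mono[OF weighted_KL_coeff_sum_sub_gaussian])
    show "sqrt (\<Sum>k=1..n. (e k s)^2 * lam k) \<le> sqrt V"
      using order_trans[OF eigen_sum_le_second_moment[OF s] V[rule_format, OF s]]
      by (simp add: mult.commute)
  qed
  moreover have "KL_trunc n s = (\<lambda>\<omega>. \<Sum>k=1..n. e k s * Z k \<omega>)" for n
    by (simp add: KL_trunc_def mult.commute fun_eq_iff)
  ultimately have "sub_gaussian M (KL_trunc n s) 0 (sqrt V)" for n
    by simp
  from sub_gaussian_nn_integral_exp_le[OF this] \<open>V \<ge> 0\<close>
  show "\<forall>\<^sub>F n in sequentially. (\<integral>\<^sup>+\<omega>. ennreal (exp (\<theta> * KL_trunc n s \<omega>)) \<partial>M) \<le> ennreal (exp (\<theta>^2 * V / 2))"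
    by simp
  show "(\<lambda>n. \<integral>\<omega>. (KL_trunc n s \<omega> - X s \<omega>)^2 \<partial>M) \<longlonglongrightarrow> 0"
    using s by (rule KL_trunc_L2_tendsto)
qed (use s in \<open>auto intro!: continuous_intros square_integrable_diff KL_trunc_square_integrable
      X_square_integrable\<close>)

text \<open>No measurability of \<open>g\<close> is assumed, so the increment is bounded through a measurable
  majorant rather than integrated directly.\<close>

lemma g_increment_dominated:
  fixes g :: "real \<Rightarrow> real \<Rightarrow> real"
  assumes V: "\<forall>s\<in>{0..1}. (\<integral>\<omega>. (X s \<omega>)^2 \<partial>M) \<le> V"
    and CM: "\<forall>k\<ge>1. lam k * (G k)^2 \<le> CM" and \<epsilon>: "\<epsilon> > 0"
    and c: "c \<in> {0..1}" and t: "t \<in> {0..1}"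
    and close: "real (trunc_index M X e \<epsilon>) * (c - t)^2 \<le> \<epsilon>^2"
    and time_close: "K'^2 * (c - t)^2 \<le> \<epsilon>^2"
    and g_lip: "\<forall>t\<in>{0..1}. \<forall>x y. g t x - g t y \<le> max \<bar>exp (a * x) - exp (a * y)\<bar> (K * \<bar>x - y\<bar>)"
    and g_time: "\<forall>s\<in>{0..1}. \<forall>t\<in>{0..1}. \<forall>x. \<bar>g t x - g s x\<bar> \<le> K' * \<bar>t - s\<bar>"
  shows "\<exists>P\<in>borel_measurable M. (\<forall>\<omega>. (g c (X c \<omega>) - g t (X t \<omega>))^2 \<le> P \<omega>) \<and>
    (\<integral>\<^sup>+\<omega>. ennreal (P \<omega>) \<partial>M)
      \<le> ennreal ((2 + K^2 + 1024 * (a^2 + K^2) * (CM + 4)^2 + 16 * a^2 * exp (8 * a^2 * V)) * \<epsilon>^2)"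
proof -
  define \<alpha>\<^sub>0 \<alpha>\<^sub>1 \<alpha>\<^sub>2 where "\<alpha>\<^sub>0 = (2 + K^2) * \<epsilon>^2" and "\<alpha>\<^sub>1 = (a^2 + K^2) / \<epsilon>^2"
    and "\<alpha>\<^sub>2 = 8 * a^2 * \<epsilon>^2"
  define P where "P \<omega> = \<alpha>\<^sub>0 + \<alpha>\<^sub>1 * (X c \<omega> - X t \<omega>)^4
    + \<alpha>\<^sub>2 * (exp (4 * a * X c \<omega>) + exp (4 * a * X t \<omega>))" for \<omega>
  define B where "B = exp ((4 * a)^2 * V / 2)"
  have \<alpha>_nonneg: "\<alpha>\<^sub>0 \<ge> 0" "\<alpha>\<^sub>1 \<ge> 0" "\<alpha>\<^sub>2 \<ge> 0"
    unfolding \<alpha>\<^sub>0_def \<alpha>\<^sub>1_def \<alpha>\<^sub>2_def by simp_all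
  have [measurable]: "X c \<in> borel_measurable M" "X t \<in> borel_measurable M"
    using c t by simp_all
  have "ennreal (P \<omega>) = ennreal \<alpha>\<^sub>0 + ennreal \<alpha>\<^sub>1 * ennreal ((X c \<omega> - X t \<omega>)^4)
      + ennreal \<alpha>\<^sub>2 * (ennreal (exp (4 * a * X c \<omega>)) + ennreal (exp (4 * a * X t \<omega>)))" for \<omega>
    using \<alpha>_nonneg unfolding P_def by (simp add: ennreal_mult ennreal_plus)
  then have "(\<integral>\<^sup>+\<omega>. ennreal (P \<omega>) \<partial>M) = ennreal \<alpha>\<^sub>0 + ennreal \<alpha>\<^sub>1 * (\<integral>\<^sup>+\<omega>. ennreal ((X c \<omega> - X t \<omega>)^4) \<partial>M)
      + ennreal \<alpha>\<^sub>2 * ((\<integral>\<^sup>+\<omega>. ennreal (exp (4 * a * X c \<omega>)) \<partial>M)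
        + (\<integral>\<^sup>+\<omega>. ennreal (exp (4 * a * X t \<omega>)) \<partial>M))"
    by (simp add: nn_integral_add nn_integral_cmult emeasure_space_1)
  also have "\<dots> \<le> ennreal \<alpha>\<^sub>0 + ennreal \<alpha>\<^sub>1 * ennreal (1024 * ((CM + 4) * \<epsilon>^2)^2)
      + ennreal \<alpha>\<^sub>2 * (ennreal B + ennreal B)"
    using X_increment_fourth_moment[OF CM \<epsilon> c t close] X_exp_moment[OF V c, of "4 * a"]
      X_exp_moment[OF V t, of "4 * a"] unfolding B_def
    by (intro add_mono mult_left_mono) auto
  also have "\<dots> = ennreal (\<alpha>\<^sub>0 + \<alpha>\<^sub>1 * (1024 * ((CM + 4) * \<epsilon>^2)^2) + \<alpha>\<^sub>2 * (B + B))"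
    using \<alpha>_nonneg unfolding B_def by (simp add: ennreal_plus ennreal_mult flip: mult_2)
  also have "\<alpha>\<^sub>0 + \<alpha>\<^sub>1 * (1024 * ((CM + 4) * \<epsilon>^2)^2) + \<alpha>\<^sub>2 * (B + B)
      = (2 + K^2 + 1024 * (a^2 + K^2) * (CM + 4)^2 + 16 * a^2 * exp (8 * a^2 * V)) * \<epsilon>^2"
    using \<epsilon> unfolding \<alpha>\<^sub>0_def \<alpha>\<^sub>1_def \<alpha>\<^sub>2_def B_def by (simp add: power2_eq_square field_simps)
  finally have "(\<integral>\<^sup>+\<omega>. ennreal (P \<omega>) \<partial>M)
      \<le> ennreal ((2 + K^2 + 1024 * (a^2 + K^2) * (CM + 4)^2 + 16 * a^2 * exp (8 * a^2 * V)) * \<epsilon>^2)" .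
  moreover have "(g c (X c \<omega>) - g t (X t \<omega>))^2 \<le> P \<omega>" for \<omega>
    unfolding P_def \<alpha>\<^sub>0_def \<alpha>\<^sub>1_def \<alpha>\<^sub>2_def
    using \<epsilon> by (intro increment_square_le_of_lipschitz_bounds[OF _ c t time_close g_lip g_time]) simp
  moreover have "P \<in> borel_measurable M"
    unfolding P_def by measurable
  ultimately show ?thesis
    by blast
qed

lemma discretization_error:
  fixes g :: "real \<Rightarrow> real \<Rightarrow> real" and f :: "('i \<Rightarrow> real) \<Rightarrow> real" and tt w :: "'i \<Rightarrow> real"
  assumes V: "\<forall>s\<in>{0..1}. (\<integral>\<omega>. (X s \<omega>)^2 \<partial>M) \<le> V"
    and CM: "\<forall>k\<ge>1. lam k * (G k)^2 \<le> CM"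
    and g_lip: "\<forall>t\<in>{0..1}. \<forall>x y. g t x - g t y \<le> max \<bar>exp (a * x) - exp (a * y)\<bar> (K * \<bar>x - y\<bar>)"
    and g_time: "\<forall>s\<in>{0..1}. \<forall>t\<in>{0..1}. \<forall>x. \<bar>g t x - g s x\<bar> \<le> K' * \<bar>t - s\<bar>"
    and tw: "\<forall>i\<in>I. tt i \<in> {0..1} \<and> w i \<ge> 0" and w_sum: "(\<Sum>i\<in>I. w i) = 1"
    and f_lip: "\<forall>x y. \<bar>f x - f y\<bar> \<le> (\<Sum>i\<in>I. w i * \<bar>x i - y i\<bar>)"
    and \<epsilon>: "0 < \<epsilon>" "\<epsilon> \<le> 1" and L: "1 \<le> trunc_index M X e \<epsilon>"
  defines "m \<equiv> real_of_int \<lceil>max (sqrt (real (trunc_index M X e \<epsilon>)) / \<epsilon>) (K'^2 / \<epsilon>^2)\<rceil>"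
  shows "(\<integral>\<^sup>+\<omega>. ennreal ((f (\<lambda>i. g (real_of_int \<lfloor>tt i * m\<rfloor> / m) (X (real_of_int \<lfloor>tt i * m\<rfloor> / m) \<omega>))
      - f (\<lambda>i. g (tt i) (X (tt i) \<omega>)))^2) \<partial>M)
    \<le> ennreal ((2 + K^2 + 1024 * (a^2 + K^2) * (CM + 4)^2 + 16 * a^2 * exp (8 * a^2 * V)) * \<epsilon>^2)"
    (is "_ \<le> ennreal (?C * _)")
proof -
  define c where "c i = real_of_int \<lfloor>tt i * m\<rfloor> / m" for i
  have "\<exists>P\<in>borel_measurable M. (\<forall>\<omega>. (g (c i) (X (c i) \<omega>) - g (tt i) (X (tt i) \<omega>))^2 \<le> P \<omega>)
      \<and> (\<integral>\<^sup>+\<omega>. ennreal (P \<omega>) \<partial>M) \<le> ennreal (?C * \<epsilon>^2)" if "i \<in> I" for i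
    using rounding_to_grid[OF \<epsilon> L, of "tt i" K'] tw that unfolding c_def m_def
    by (intro g_increment_dominated[OF V CM \<epsilon>(1) _ _ _ _ g_lip g_time]) auto
  then show ?thesis
    unfolding c_def using tw by (intro nn_integral_lipschitz_square_le[OF _ w_sum f_lip]) auto
qed

end

theorem theorem7:
  fixes M :: "'a measure" and X :: "real \<Rightarrow> 'a \<Rightarrow> real"
    and e :: "nat \<Rightarrow> real \<Rightarrow> real" and lam :: "nat \<Rightarrow> real" and G :: "nat \<Rightarrow> real"
    and g :: "real \<Rightarrow> real \<Rightarrow> real" and c_g K_g K'_g :: real
  assumes prob: "prob_space M"
    and joint_meas: "(\<lambda>(t, \<omega>). X t \<omega>) \<in> borel_measurable (restrict_space lborel {0..1} \<Otimes>\<^sub>M M)"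
    and centered: "\<forall>t\<in>{0..1}. integrable M (X t) \<and> integrable M (\<lambda>\<omega>. (X t \<omega>)^2)
                      \<and> (\<integral>\<omega>. X t \<omega> \<partial>M) = 0"
    and cov_cont: "continuous_on ({0..1} \<times> {0..1}) (\<lambda>(s, t). \<integral>\<omega>. X s \<omega> * X t \<omega> \<partial>M)"
    and eigen: "\<forall>k\<ge>1. \<forall>t\<in>{0..1}.
                  (LBINT s=0..1. (\<integral>\<omega>. X s \<omega> * X t \<omega> \<partial>M) * e k s) = lam k * e k t"
    and orthonormal: "\<forall>j\<ge>1. \<forall>k\<ge>1. (LBINT s=0..1. e j s * e k s) = (if j = k then 1 else 0)"
    and lam_nonneg: "\<forall>k\<ge>1. lam k \<ge> 0"
    and lam_decr: "\<forall>k\<ge>1. lam (Suc k) \<le> lam k"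
    and KL_conv: "\<forall>\<delta>>0. \<exists>N. \<forall>n\<ge>N. \<forall>t\<in>{0..1}.
                  (\<integral>\<omega>. ((\<Sum>k=1..n. KL_coeff X e k \<omega> * e k t) - X t \<omega>)^2 \<partial>M) \<le> \<delta>"
    and indep: "prob_space.indep_vars M (\<lambda>_. borel) (KL_coeff X e) {1..}"
    and subg: "\<forall>k\<ge>1. sub_gaussian M (KL_coeff X e k) 0 (sqrt (lam k))"
    and lip: "\<forall>k\<ge>1. \<forall>s\<in>{0..1}. \<forall>t\<in>{0..1}. \<bar>e k s - e k t\<bar> \<le> G k * \<bar>s - t\<bar>"
    and C_M: "bdd_above ((\<lambda>k. lam k * (G k)^2) ` {1..})"
    and K_g: "K_g \<ge> 0" and K'_g: "K'_g \<ge> 0"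
    and g_lip: "\<forall>t\<in>{0..1}. \<forall>x y. g t x - g t y \<le> max \<bar>exp (c_g * x) - exp (c_g * y)\<bar> (K_g * \<bar>x - y\<bar>)"
    and g_time: "\<forall>s\<in>{0..1}. \<forall>t\<in>{0..1}. \<forall>x. \<bar>g t x - g s x\<bar> \<le> K'_g * \<bar>t - s\<bar>"
  shows "\<exists>C::real. \<forall>(T::nat) (tt::nat \<Rightarrow> real) (w::nat \<Rightarrow> real) (f::(nat \<Rightarrow> real) \<Rightarrow> real) (\<epsilon>::real).
           T \<ge> 1 \<longrightarrow> (\<forall>i\<in>{1..T}. tt i \<in> {0..1} \<and> w i \<ge> 0) \<longrightarrow> (\<Sum>i=1..T. w i) = 1 \<longrightarrow>
           (\<forall>x y. \<bar>f x - f y\<bar> \<le> (\<Sum>i=1..T. w i * \<bar>x i - y i\<bar>)) \<longrightarrow>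
           0 < \<epsilon> \<longrightarrow> \<epsilon> \<le> 1 \<longrightarrow> trunc_index M X e \<epsilon> \<ge> 1 \<longrightarrow>
           (let Mg = real_of_int \<lceil>max (sqrt (real (trunc_index M X e \<epsilon>)) / \<epsilon>) (K'_g^2 / \<epsilon>^2)\<rceil>;
                c = (\<lambda>t. real_of_int \<lfloor>t * Mg\<rfloor> / Mg);
                S = (\<lambda>t \<omega>. g t (X t \<omega>))
            in (\<integral>\<^sup>+\<omega>. ennreal ((f (\<lambda>i. S (c (tt i)) \<omega>) - f (\<lambda>i. S (tt i) \<omega>))^2) \<partial>M)
               \<le> ennreal (C * \<epsilon>^2))"
proof -
  interpret KL_process M X e lam G
    unfolding KL_process_def KL_process_axioms_def
    using prob joint_meas centered cov_cont eigen orthonormal lam_nonneg KL_conv indep subg lip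
    by blast
  obtain V where V: "\<forall>s\<in>{0..1}. (\<integral>\<omega>. (X s \<omega>)^2 \<partial>M) \<le> V"
    using second_moment_bounded by blast
  obtain CM where CM: "\<forall>k\<ge>1. lam k * (G k)^2 \<le> CM"
    using C_M unfolding bdd_above_def by auto
  show ?thesis
    unfolding Let_def
    by (intro exI allI impI, rule discretization_error[OF V CM g_lip g_time]) auto
qed

end
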